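(* Let $\mathscr X\subset\mathbb R^d$ be compact, $\|\cdot\|$ a norm, and $\mathscr X_N\subset\mathscr X$ a finite set of $N$ candidate points. Let $\mathbf x_1\in\mathscr X_N$ and, for $n\ge1$, let $\mathbf x_{n+1}$ be any point of $\mathrm{Arg}\max_{\mathbf x\in\mathscr X_N}\min_{1\le i\le n}\|\mathbf x-\mathbf x_i\|$, with $\mathbf X_n=\{\mathbf x_1,\ldots,\mathbf x_n\}$. Set $\alpha_n=1-\mathsf{CR}_{\mathscr X}(\mathscr X_N)/\mathsf{CR}_{\mathscr X}(\mathbf X_n)$. Then, for $n<N$ (with the bounds below read as trivial when $\alpha_n=0$), $$\mathsf{CR}_{\mathscr X}(\mathbf X_n)\le(2/\alpha_n)\,\mathsf{CR}_n^*\ \ (n\ge1),\qquad\mathsf{SR}(\mathbf X_n)\ge(\alpha_n/2)\,\mathsf{SR}_n^*\ \ (n\ge2),\qquad\mathsf{MR}_{\mathscr X}(\mathbf X_n)\le 2/\alpha_n\ \ (n\ge2).$$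
   Context: For a set $\mathscr Y$ and a finite point set $\mathbf Z$, $\mathsf{CR}_{\mathscr Y}(\mathbf Z)=\sup_{\mathbf y\in\mathscr Y}\min_{\mathbf z\in\mathbf Z}\|\mathbf y-\mathbf z\|$. Separation radius $\mathsf{SR}(\mathbf X_n)=\tfrac12\min_{i\ne j}\|\mathbf x_i-\mathbf x_j\|$; mesh-ratio $\mathsf{MR}_{\mathscr X}(\mathbf X_n)=\mathsf{CR}_{\mathscr X}(\mathbf X_n)/\mathsf{SR}(\mathbf X_n)$. $\mathsf{CR}_n^*$ is the minimum of $\mathsf{CR}_{\mathscr X}$ and $\mathsf{SR}_n^*$ the maximum of $\mathsf{SR}$ over all $n$-point designs of distinct points in $\mathscr X$. *)

theory Defs
  imports "HOL-Analysis.Analysis"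
begin

definition is_norm :: "('a::real_vector \<Rightarrow> real) \<Rightarrow> bool" where
  "is_norm nrm \<longleftrightarrow>
     (\<forall>x. nrm x = 0 \<longleftrightarrow> x = 0) \<and>
     (\<forall>c x. nrm (scaleR c x) = \<bar>c\<bar> * nrm x) \<and>
     (\<forall>x y. nrm (x + y) \<le> nrm x + nrm y)"

definition CR :: "('a::real_vector \<Rightarrow> real) \<Rightarrow> 'a set \<Rightarrow> 'a set \<Rightarrow> real" where
  "CR nrm Y Z = (SUP y\<in>Y. Min ((\<lambda>z. nrm (y - z)) ` Z))"

definition SR :: "('a::real_vector \<Rightarrow> real) \<Rightarrow> 'a set \<Rightarrow> real" where
  "SR nrm Z = Min {nrm (a - b) | a b. a \<in> Z \<and> b \<in> Z \<and> a \<noteq> b} / 2"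

definition MR :: "('a::real_vector \<Rightarrow> real) \<Rightarrow> 'a set \<Rightarrow> 'a set \<Rightarrow> real" where
  "MR nrm Y Z = CR nrm Y Z / SR nrm Z"

definition CRstar :: "('a::real_vector \<Rightarrow> real) \<Rightarrow> 'a set \<Rightarrow> nat \<Rightarrow> real" where
  "CRstar nrm X n = Inf {CR nrm X Z | Z. Z \<subseteq> X \<and> finite Z \<and> card Z = n}"

definition SRstar :: "('a::real_vector \<Rightarrow> real) \<Rightarrow> 'a set \<Rightarrow> nat \<Rightarrow> real" where
  "SRstar nrm X n = Sup {SR nrm Z | Z. Z \<subseteq> X \<and> finite Z \<and> card Z = n}"

end

theory Submission
  imports Defs
begin

(* Let gap m be the distance of the greedy point x (m + 1) to X_m; by greediness it is the
   covering radius of X_N by X_m, it decreases in m, and x 1, ..., x (m + 1) are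
   gap m-separated.  Covering X through X_N gives CR(X_m) <= CR(X_N) + gap m, which is
   alpha_m CR(X_m) <= gap m.  Pigeonhole arguments (two points sharing a nearest centre)
   compare with optimal designs: n + 1 points that are gap n-separated force
   CR*_n >= gap n / 2, and every n-point design has SR <= CR(X_(n-1)), so
   SR*_n <= CR(X_(n-1)), while SR(X_n) >= gap (n - 1) / 2.  Since alpha_n decreases in n,
   the three bounds follow. *)

lemma is_norm_basic:
  assumes "is_norm nrm"
  shows is_norm_zero: "nrm 0 = 0"
    and is_norm_minus_commute: "nrm (a - b) = nrm (b - a)"
    and is_norm_ge_zero: "0 \<le> nrm v"
    and is_norm_pos: "v \<noteq> 0 \<Longrightarrow> 0 < nrm v"
    and is_norm_triangle_diff: "nrm (a - c) \<le> nrm (a - b) + nrm (b - c)"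
proof -
  have scale: "\<And>c x. nrm (c *\<^sub>R x) = \<bar>c\<bar> * nrm x"
    and triangle: "\<And>x y. nrm (x + y) \<le> nrm x + nrm y"
    and zero: "\<And>x. nrm x = 0 \<longleftrightarrow> x = 0"
    using assms unfolding is_norm_def by auto
  show "nrm 0 = 0" using zero by simp
  have minus: "nrm (- v) = nrm v" for v using scale[of "-1" v] by simp
  show "nrm (a - b) = nrm (b - a)" using minus[of "a - b"] by simp
  show nonneg: "0 \<le> nrm v" for v using triangle[of v "- v"] minus[of v] zero[of 0] by simp
  show "v \<noteq> 0 \<Longrightarrow> 0 < nrm v" using nonneg[of v] zero[of v] by linarith
  show "nrm (a - c) \<le> nrm (a - b) + nrm (b - c)" using triangle[of "a - b" "b - c"] by simp
qed

lemma is_norm_sum_le: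
  assumes "is_norm nrm" "finite S"
  shows "nrm (\<Sum>i\<in>S. f i) \<le> (\<Sum>i\<in>S. nrm (f i))"
  using assms(2)
proof (induction S rule: finite_induct)
  case empty
  then show ?case using is_norm_zero[OF assms(1)] by simp
next
  case (insert a F)
  have "nrm (f a + sum f F) \<le> nrm (f a) + nrm (sum f F)"
    using assms(1) unfolding is_norm_def by blast
  then show ?case using insert by simp
qed

lemma is_norm_le_Basis_sum:
  fixes nrm :: "'a::euclidean_space \<Rightarrow> real"
  assumes "is_norm nrm"
  shows "nrm v \<le> (\<Sum>b\<in>Basis. nrm b) * norm v"
proof -
  have "nrm v = nrm (\<Sum>b\<in>Basis. (v \<bullet> b) *\<^sub>R b)"
    by (simp add: euclidean_representation)
  also have "\<dots> \<le> (\<Sum>b\<in>Basis. nrm ((v \<bullet> b) *\<^sub>R b))"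
    by (rule is_norm_sum_le[OF assms]) simp
  also have "\<dots> = (\<Sum>b\<in>Basis. \<bar>v \<bullet> b\<bar> * nrm b)"
    using assms unfolding is_norm_def by simp
  also have "\<dots> \<le> (\<Sum>b\<in>Basis. norm v * nrm b)"
    by (intro sum_mono mult_right_mono Basis_le_norm is_norm_ge_zero[OF assms])
  finally show ?thesis by (simp add: sum_distrib_left mult.commute)
qed

definition nrm_setdist :: "('a::real_vector \<Rightarrow> real) \<Rightarrow> 'a \<Rightarrow> 'a set \<Rightarrow> real" where
  "nrm_setdist nrm y Z = Min ((\<lambda>z. nrm (y - z)) ` Z)"

lemma CR_eq_SUP_nrm_setdist: "CR nrm Y Z = (SUP y\<in>Y. nrm_setdist nrm y Z)"
  unfolding CR_def nrm_setdist_def by simp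

lemma nrm_setdist_le: "finite Z \<Longrightarrow> z \<in> Z \<Longrightarrow> nrm_setdist nrm y Z \<le> nrm (y - z)"
  unfolding nrm_setdist_def by simp

lemma nrm_setdist_nonneg:
  "is_norm nrm \<Longrightarrow> finite Z \<Longrightarrow> Z \<noteq> {} \<Longrightarrow> 0 \<le> nrm_setdist nrm y Z"
  unfolding nrm_setdist_def by (simp add: is_norm_ge_zero)

lemma nrm_setdist_attained:
  assumes "finite Z" "Z \<noteq> {}"
  obtains z where "z \<in> Z" "nrm_setdist nrm y Z = nrm (y - z)"
proof -
  have "Min ((\<lambda>z. nrm (y - z)) ` Z) \<in> (\<lambda>z. nrm (y - z)) ` Z" using assms by (intro Min_in) auto
  then show thesis using that unfolding nrm_setdist_def by auto
qed

lemma nrm_setdist_antimono: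
  "finite W \<Longrightarrow> Z \<subseteq> W \<Longrightarrow> Z \<noteq> {} \<Longrightarrow> nrm_setdist nrm y W \<le> nrm_setdist nrm y Z"
  unfolding nrm_setdist_def by (intro Min_antimono) auto

lemma bdd_above_nrm_setdist:
  fixes nrm :: "'a::euclidean_space \<Rightarrow> real"
  assumes "is_norm nrm" "bounded X" "finite Z" "Z \<noteq> {}"
  shows "bdd_above ((\<lambda>y. nrm_setdist nrm y Z) ` X)"
proof -
  obtain z where z: "z \<in> Z" using assms by auto
  obtain B where B: "\<And>y. y \<in> X \<Longrightarrow> norm y \<le> B"
    using assms(2) bounded_iff by blast
  define C where "C = (\<Sum>b\<in>Basis. nrm b)"
  have "0 \<le> C" unfolding C_def by (intro sum_nonneg is_norm_ge_zero[OF assms(1)])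
  have "nrm_setdist nrm y Z \<le> C * (B + norm z)" if "y \<in> X" for y
  proof -
    have "nrm_setdist nrm y Z \<le> nrm (y - z)" by (rule nrm_setdist_le[OF assms(3) z])
    also have "\<dots> \<le> C * norm (y - z)" unfolding C_def by (rule is_norm_le_Basis_sum[OF assms(1)])
    also have "\<dots> \<le> C * (B + norm z)"
      using B[OF that] norm_triangle_ineq4[of y z] \<open>0 \<le> C\<close> by (intro mult_left_mono) auto
    finally show ?thesis .
  qed
  then show ?thesis by (intro bdd_aboveI2)
qed

lemma nrm_setdist_le_CR:
  fixes nrm :: "'a::euclidean_space \<Rightarrow> real"
  assumes "is_norm nrm" "bounded X" "finite Z" "Z \<noteq> {}" "y \<in> X"
  shows "nrm_setdist nrm y Z \<le> CR nrm X Z"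
  unfolding CR_eq_SUP_nrm_setdist by (rule cSUP_upper[OF assms(5) bdd_above_nrm_setdist[OF assms(1-4)]])

lemma CR_least:
  "X \<noteq> {} \<Longrightarrow> (\<And>y. y \<in> X \<Longrightarrow> nrm_setdist nrm y Z \<le> c) \<Longrightarrow> CR nrm X Z \<le> c"
  unfolding CR_eq_SUP_nrm_setdist by (intro cSUP_least)

lemma CR_nonneg:
  fixes nrm :: "'a::euclidean_space \<Rightarrow> real"
  assumes "is_norm nrm" "bounded X" "X \<noteq> {}" "finite Z" "Z \<noteq> {}"
  shows "0 \<le> CR nrm X Z"
proof -
  obtain y where "y \<in> X" using assms(3) by blast
  then show ?thesis
    using nrm_setdist_nonneg[OF assms(1,4,5)] nrm_setdist_le_CR[OF assms(1,2,4,5)] by (meson order_trans)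
qed

lemma CR_antimono:
  fixes nrm :: "'a::euclidean_space \<Rightarrow> real"
  assumes "is_norm nrm" "bounded X" "X \<noteq> {}" "finite W" "Z \<subseteq> W" "Z \<noteq> {}"
  shows "CR nrm X W \<le> CR nrm X Z"
proof (rule CR_least[OF assms(3)])
  have "finite Z" using assms(4,5) finite_subset by blast
  fix y assume "y \<in> X"
  then show "nrm_setdist nrm y W \<le> CR nrm X Z"
    using nrm_setdist_antimono[OF assms(4-6)] nrm_setdist_le_CR[OF assms(1,2) \<open>finite Z\<close> assms(6)]
    by (meson order_trans)
qed

lemma CR_le_CR_add:
  fixes nrm :: "'a::euclidean_space \<Rightarrow> real"
  assumes "is_norm nrm" "bounded X" "X \<noteq> {}" "finite Z" "Z \<noteq> {}" "finite W" "W \<noteq> {}"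
    and "\<And>z. z \<in> Z \<Longrightarrow> nrm_setdist nrm z W \<le> c"
  shows "CR nrm X W \<le> CR nrm X Z + c"
proof (rule CR_least[OF assms(3)])
  fix y assume y: "y \<in> X"
  obtain z where z: "z \<in> Z" "nrm_setdist nrm y Z = nrm (y - z)"
    using nrm_setdist_attained[OF assms(4,5)] by blast
  obtain w where w: "w \<in> W" "nrm_setdist nrm z W = nrm (z - w)"
    using nrm_setdist_attained[OF assms(6,7)] by blast
  have "nrm_setdist nrm y W \<le> nrm (y - w)" by (rule nrm_setdist_le[OF assms(6) w(1)])
  also have "\<dots> \<le> nrm (y - z) + nrm (z - w)" by (rule is_norm_triangle_diff[OF assms(1)])
  also have "\<dots> \<le> CR nrm X Z + c"
    using z w assms(8)[OF z(1)] nrm_setdist_le_CR[OF assms(1,2,4,5) y] by linarith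
  finally show "nrm_setdist nrm y W \<le> CR nrm X Z + c" .
qed

text \<open>Pigeonhole: two points of A share a nearest point of B; go through it.\<close>
lemma exists_close_pair:
  fixes nrm :: "'a::euclidean_space \<Rightarrow> real"
  assumes "is_norm nrm" "bounded X" "finite B" "B \<noteq> {}" "finite A" "card B < card A" "A \<subseteq> X"
  obtains a a' where "a \<in> A" "a' \<in> A" "a \<noteq> a'" "nrm (a - a') \<le> 2 * CR nrm X B"
proof -
  have "\<forall>a. \<exists>z. z \<in> B \<and> nrm_setdist nrm a B = nrm (a - z)"
    using nrm_setdist_attained[OF assms(3,4)] by metis
  then obtain f where f: "\<And>a. f a \<in> B \<and> nrm_setdist nrm a B = nrm (a - f a)" by metis
  have "card (f ` A) \<le> card B" using f by (intro card_mono[OF assms(3)]) auto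
  then have "\<not> inj_on f A" using assms(6) card_image by fastforce
  then obtain a a' where aa: "a \<in> A" "a' \<in> A" "a \<noteq> a'" "f a = f a'"
    unfolding inj_on_def by blast
  have "a \<in> X" "a' \<in> X" using aa(1,2) assms(7) by auto
  have "nrm (a - a') \<le> nrm (a - f a) + nrm (f a - a')" by (rule is_norm_triangle_diff[OF assms(1)])
  also have "nrm (f a - a') = nrm (a' - f a')"
    using aa(4) is_norm_minus_commute[OF assms(1)] by metis
  also have "nrm (a - f a) + nrm (a' - f a') \<le> 2 * CR nrm X B"
    using f[of a] f[of a'] nrm_setdist_le_CR[OF assms(1-4) \<open>a \<in> X\<close>]
      nrm_setdist_le_CR[OF assms(1-4) \<open>a' \<in> X\<close>] by linarith
  finally show ?thesis using aa that by blast
qed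

lemma finite_distance_set:
  "finite Z \<Longrightarrow> finite {nrm (a - b) | a b. a \<in> Z \<and> b \<in> Z \<and> a \<noteq> b}"
  by (rule finite_subset[of _ "(\<lambda>(a, b). nrm (a - b)) ` (Z \<times> Z)"]) auto

lemma SR_geI:
  assumes "finite Z" "a \<in> Z" "b \<in> Z" "a \<noteq> b"
    and "\<And>a b. a \<in> Z \<Longrightarrow> b \<in> Z \<Longrightarrow> a \<noteq> b \<Longrightarrow> d \<le> nrm (a - b)"
  shows "d / 2 \<le> SR nrm Z"
proof -
  have "{nrm (a - b) | a b. a \<in> Z \<and> b \<in> Z \<and> a \<noteq> b} \<noteq> {}" using assms(2-4) by blast
  then have "d \<le> Min {nrm (a - b) | a b. a \<in> Z \<and> b \<in> Z \<and> a \<noteq> b}"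
    using finite_distance_set[OF assms(1), of nrm] assms(5) by (auto simp: Min_ge_iff)
  then show ?thesis unfolding SR_def by simp
qed

lemma SR_le_half_nrm:
  assumes "finite Z" "a \<in> Z" "b \<in> Z" "a \<noteq> b"
  shows "SR nrm Z \<le> nrm (a - b) / 2"
proof -
  have "Min {nrm (a - b) | a b. a \<in> Z \<and> b \<in> Z \<and> a \<noteq> b} \<le> nrm (a - b)"
    using finite_distance_set[OF assms(1), of nrm] assms(2-4) by (intro Min_le) blast+
  then show ?thesis unfolding SR_def by simp
qed

lemma SR_le_CR:
  fixes nrm :: "'a::euclidean_space \<Rightarrow> real"
  assumes "is_norm nrm" "bounded X" "finite B" "B \<noteq> {}"
    and "Z \<subseteq> X" "finite Z" "card B < card Z"
  shows "SR nrm Z \<le> CR nrm X B"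
proof -
  obtain a a' where "a \<in> Z" "a' \<in> Z" "a \<noteq> a'" "nrm (a - a') \<le> 2 * CR nrm X B"
    using exists_close_pair[OF assms(1-4,6,7,5)] .
  with SR_le_half_nrm[OF assms(6), of a a' nrm] show ?thesis by linarith
qed

lemma SRstar_le_CR:
  fixes nrm :: "'a::euclidean_space \<Rightarrow> real"
  assumes "is_norm nrm" "bounded X" "finite B" "B \<noteq> {}" "card B < n"
    and "Z \<subseteq> X" "finite Z" "card Z = n"
  shows "SRstar nrm X n \<le> CR nrm X B"
  unfolding SRstar_def using assms SR_le_CR[OF assms(1-4)] by (intro cSup_least) auto

lemma SR_le_SRstar:
  fixes nrm :: "'a::euclidean_space \<Rightarrow> real" and B :: "'a set"
  assumes "is_norm nrm" "bounded X" "finite B" "B \<noteq> {}" "card B < n"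
    and "Z \<subseteq> X" "finite Z" "card Z = n"
  shows "SR nrm Z \<le> SRstar nrm X n"
  unfolding SRstar_def using assms SR_le_CR[OF assms(1-4)]
  by (intro cSup_upper bdd_aboveI[of _ "CR nrm X B"]) auto

lemma CRstar_ge_half_separation:
  fixes nrm :: "'a::euclidean_space \<Rightarrow> real"
  assumes "is_norm nrm" "bounded X" "A \<subseteq> X" "finite A" "1 \<le> n" "n < card A"
    and "\<And>a b. a \<in> A \<Longrightarrow> b \<in> A \<Longrightarrow> a \<noteq> b \<Longrightarrow> d \<le> nrm (a - b)"
  shows "d / 2 \<le> CRstar nrm X n"
  unfolding CRstar_def
proof (rule cInf_greatest)
  obtain Z where "Z \<subseteq> A" "card Z = n" "finite Z"
    using obtain_subset_with_card_n[of n A] assms(6) by auto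
  then show "{CR nrm X Z |Z. Z \<subseteq> X \<and> finite Z \<and> card Z = n} \<noteq> {}"
    using assms(3) by blast
next
  fix t assume "t \<in> {CR nrm X Z |Z. Z \<subseteq> X \<and> finite Z \<and> card Z = n}"
  then obtain Z where Z: "t = CR nrm X Z" "finite Z" "card Z = n" by blast
  then have "Z \<noteq> {}" using assms(5) by auto
  obtain a a' where "a \<in> A" "a' \<in> A" "a \<noteq> a'" "nrm (a - a') \<le> 2 * CR nrm X Z"
    using exists_close_pair[OF assms(1,2) Z(2) \<open>Z \<noteq> {}\<close> assms(4) _ assms(3)] Z(3) assms(6)
    by blast
  with assms(7) Z(1) show "d / 2 \<le> t" by fastforce
qed

locale greedy_packing =
  fixes nrm :: "'a::euclidean_space \<Rightarrow> real" and X XN :: "'a set" and x :: "nat \<Rightarrow> 'a"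
  assumes norm: "is_norm nrm" and bounded_X: "bounded X"
    and finite_XN: "finite XN" and XN_subset: "XN \<subseteq> X" and x1_in: "x 1 \<in> XN"
    and greedy: "\<And>m. m \<ge> 1 \<Longrightarrow> x (m + 1) \<in> XN \<and>
        (\<forall>y\<in>XN. (MIN i\<in>{1..m}. nrm (y - x i)) \<le> (MIN i\<in>{1..m}. nrm (x (m + 1) - x i)))"
begin

definition pts :: "nat \<Rightarrow> 'a set" where
  "pts m = x ` {1..m}"

text \<open>By greediness, gap m is also the covering radius of XN by pts m.\<close>
definition gap :: "nat \<Rightarrow> real" where
  "gap m = nrm_setdist nrm (x (m + 1)) (pts m)"

definition alpha :: "nat \<Rightarrow> real" where
  "alpha m = 1 - CR nrm X XN / CR nrm X (pts m)"

lemma X_nonempty: "X \<noteq> {}"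
  using x1_in XN_subset by auto

lemma XN_nonempty: "XN \<noteq> {}"
  using x1_in by auto

lemma x_in_XN: "1 \<le> m \<Longrightarrow> x m \<in> XN"
  using x1_in greedy[of "m - 1"] by (cases "m = 1") auto

lemma finite_pts [simp]: "finite (pts m)"
  unfolding pts_def by simp

lemma pts_nonempty: "1 \<le> m \<Longrightarrow> pts m \<noteq> {}"
  unfolding pts_def by auto

lemma pts_subset_XN: "pts m \<subseteq> XN"
  unfolding pts_def using x_in_XN by auto

lemma pts_subset_X: "pts m \<subseteq> X"
  using pts_subset_XN XN_subset by blast

lemma pts_mono: "m \<le> k \<Longrightarrow> pts m \<subseteq> pts k"
  unfolding pts_def by auto

lemma card_pts_le: "card (pts m) \<le> m"
  unfolding pts_def using card_image_le[of "{1..m}" x] by simp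

lemma nrm_setdist_le_gap: "1 \<le> m \<Longrightarrow> y \<in> XN \<Longrightarrow> nrm_setdist nrm y (pts m) \<le> gap m"
  using greedy[of m] unfolding gap_def nrm_setdist_def pts_def by (simp add: image_image)

lemma gap_pos: "1 \<le> m \<Longrightarrow> m < card XN \<Longrightarrow> 0 < gap m"
proof -
  assume m: "1 \<le> m" "m < card XN"
  then have "\<not> XN \<subseteq> pts m" using card_mono[of "pts m" XN] card_pts_le[of m] by fastforce
  then obtain y where y: "y \<in> XN" "y \<notin> pts m" by blast
  obtain z where z: "z \<in> pts m" "nrm_setdist nrm y (pts m) = nrm (y - z)"
    using nrm_setdist_attained[OF finite_pts pts_nonempty[OF m(1)]] by blast
  have "0 < nrm (y - z)" using y z is_norm_pos[OF norm, of "y - z"] by auto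
  then show ?thesis using z nrm_setdist_le_gap[OF m(1) y(1)] by linarith
qed

lemma gap_Suc_le: "1 \<le> m \<Longrightarrow> gap (Suc m) \<le> gap m"
proof -
  assume m: "1 \<le> m"
  have "gap (Suc m) \<le> nrm_setdist nrm (x (Suc m + 1)) (pts m)"
    unfolding gap_def by (rule nrm_setdist_antimono[OF finite_pts pts_mono pts_nonempty[OF m]]) simp
  also have "\<dots> \<le> gap m" by (rule nrm_setdist_le_gap[OF m x_in_XN]) simp
  finally show ?thesis .
qed

lemma gap_antimono:
  assumes "1 \<le> m" "m \<le> k"
  shows "gap k \<le> gap m"
  using assms(2)
proof (induction k rule: dec_induct)
  case base
  show ?case by simp
next
  case (step k)
  then show ?case using gap_Suc_le[of k] assms(1) by simp
qed

lemma gap_le_nrm_less: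
  assumes "1 \<le> i" "i < j" "j \<le> k + 1" "1 \<le> k"
  shows "gap k \<le> nrm (x j - x i)"
proof -
  have "gap k \<le> gap (j - 1)" using assms by (intro gap_antimono) auto
  also have "\<dots> = nrm_setdist nrm (x j) (x ` {1..j - 1})"
    using assms unfolding gap_def pts_def by simp
  also have "\<dots> \<le> nrm (x j - x i)" using assms by (intro nrm_setdist_le) auto
  finally show ?thesis .
qed

lemma gap_le_nrm_index:
  assumes "1 \<le> k" "i \<in> {1..k + 1}" "j \<in> {1..k + 1}" "i \<noteq> j"
  shows "gap k \<le> nrm (x i - x j)"
proof (cases "i < j")
  case True
  then show ?thesis
    using gap_le_nrm_less[of i j k] assms is_norm_minus_commute[OF norm, of "x i" "x j"] by auto
next
  case False
  then show ?thesis using gap_le_nrm_less[of j i k] assms by auto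
qed

lemma gap_le_nrm:
  assumes "1 \<le> k" "a \<in> pts (k + 1)" "b \<in> pts (k + 1)" "a \<noteq> b"
  shows "gap k \<le> nrm (a - b)"
proof -
  obtain i j where ij: "a = x i" "b = x j" "i \<in> {1..k + 1}" "j \<in> {1..k + 1}"
    using assms(2,3) unfolding pts_def by blast
  with assms(4) have "i \<noteq> j" by blast
  with ij show ?thesis using gap_le_nrm_index[OF assms(1), of i j] by simp
qed

lemma card_pts: "m \<le> card XN \<Longrightarrow> card (pts m) = m"
proof -
  assume m: "m \<le> card XN"
  have "inj_on x {1..m}"
  proof (rule inj_onI, rule ccontr)
    fix i j assume ij: "i \<in> {1..m}" "j \<in> {1..m}" "x i = x j" "i \<noteq> j"
    have "\<exists>k. m = k + 1 \<and> 1 \<le> k" using ij by (intro exI[of _ "m - 1"]) auto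
    then obtain k where k: "m = k + 1" "1 \<le> k" by blast
    have "gap k \<le> nrm (x i - x j)" using ij k by (intro gap_le_nrm_index) auto
    moreover have "0 < gap k" using m k by (intro gap_pos) auto
    ultimately show False using ij(3) is_norm_zero[OF norm] by simp
  qed
  then show ?thesis unfolding pts_def by (simp add: card_image)
qed

lemma CR_pts_le: "1 \<le> m \<Longrightarrow> CR nrm X (pts m) \<le> CR nrm X XN + gap m"
  by (intro CR_le_CR_add[OF norm bounded_X X_nonempty finite_XN XN_nonempty finite_pts]
      pts_nonempty nrm_setdist_le_gap)

lemma gap_le_CR_pts: "1 \<le> m \<Longrightarrow> gap m \<le> CR nrm X (pts m)"
  unfolding gap_def using XN_subset x_in_XN[of "m + 1"]
  by (intro nrm_setdist_le_CR[OF norm bounded_X finite_pts pts_nonempty]) auto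

lemma CR_pts_pos: "1 \<le> m \<Longrightarrow> m < card XN \<Longrightarrow> 0 < CR nrm X (pts m)"
  using gap_pos gap_le_CR_pts by fastforce

lemma alpha_mult_CR_le_gap:
  assumes "1 \<le> m" "m < card XN"
  shows "alpha m * CR nrm X (pts m) \<le> gap m"
proof -
  have "alpha m * CR nrm X (pts m) = CR nrm X (pts m) - CR nrm X XN"
    unfolding alpha_def using CR_pts_pos[OF assms] by (simp add: field_simps)
  then show ?thesis using CR_pts_le[OF assms(1)] by linarith
qed

lemma alpha_antimono:
  assumes "1 \<le> m" "m \<le> k" "k < card XN"
  shows "alpha k \<le> alpha m"
proof -
  have "0 \<le> CR nrm X XN"
    by (rule CR_nonneg[OF norm bounded_X X_nonempty finite_XN XN_nonempty])
  moreover have "CR nrm X (pts k) \<le> CR nrm X (pts m)"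
    using assms by (intro CR_antimono[OF norm bounded_X X_nonempty finite_pts] pts_mono pts_nonempty)
  moreover have "0 < CR nrm X (pts k)" using assms by (intro CR_pts_pos) auto
  ultimately show ?thesis unfolding alpha_def by (simp add: frac_le)
qed

lemma SR_pts_ge: "2 \<le> n \<Longrightarrow> n \<le> card XN \<Longrightarrow> gap (n - 1) / 2 \<le> SR nrm (pts n)"
proof -
  assume n: "2 \<le> n" "n \<le> card XN"
  then have "x 1 \<in> pts n" "x 2 \<in> pts n" unfolding pts_def by auto
  moreover have "x 1 \<noteq> x 2"
    using card_pts[of 2] n by (auto simp: pts_def numeral_2_eq_2 atLeastAtMostSuc_conv)
  moreover have "1 \<le> n - 1" "n - 1 + 1 = n" using n by auto
  ultimately show ?thesis using gap_le_nrm[of "n - 1"] by (intro SR_geI) auto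
qed

lemma CR_pts_le_CRstar:
  assumes "1 \<le> n" "n < card XN" "0 < alpha n"
  shows "CR nrm X (pts n) \<le> 2 / alpha n * CRstar nrm X n"
proof -
  have "gap n / 2 \<le> CRstar nrm X n"
    using assms card_pts[of "n + 1"] gap_le_nrm[of n]
    by (intro CRstar_ge_half_separation[OF norm bounded_X pts_subset_X finite_pts]) auto
  then have "alpha n * CR nrm X (pts n) \<le> 2 * CRstar nrm X n"
    using alpha_mult_CR_le_gap[OF assms(1,2)] by linarith
  then show ?thesis using assms(3) by (simp add: field_simps)
qed

lemma SR_pts_ge_SRstar:
  assumes "2 \<le> n" "n < card XN"
  shows "alpha n / 2 * SRstar nrm X n \<le> SR nrm (pts n)"
proof -
  have m: "1 \<le> n - 1" "n - 1 < card XN" "card (pts (n - 1)) < n"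
    using assms card_pts[of "n - 1"] by auto
  have SR: "gap (n - 1) / 2 \<le> SR nrm (pts n)" using assms by (intro SR_pts_ge) auto
  have design: "pts n \<subseteq> X" "finite (pts n)" "card (pts n) = n"
    using assms pts_subset_X card_pts by auto
  show ?thesis
  proof (cases "0 \<le> alpha n")
    case True
    have "SRstar nrm X n \<le> CR nrm X (pts (n - 1))"
      using m(3) design by (intro SRstar_le_CR[OF norm bounded_X finite_pts pts_nonempty[OF m(1)]])
    then have "alpha n * SRstar nrm X n \<le> alpha n * CR nrm X (pts (n - 1))"
      using True by (intro mult_left_mono)
    also have "\<dots> \<le> alpha (n - 1) * CR nrm X (pts (n - 1))"
      using assms m CR_pts_pos[of "n - 1"] by (intro mult_right_mono alpha_antimono) auto
    also have "\<dots> \<le> gap (n - 1)" using alpha_mult_CR_le_gap m by blast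
    finally show ?thesis using SR by linarith
  next
    case False
    have "SR nrm (pts n) \<le> SRstar nrm X n"
      using m(3) design by (intro SR_le_SRstar[OF norm bounded_X finite_pts pts_nonempty[OF m(1)]])
    then have "0 \<le> SRstar nrm X n" using SR gap_pos[OF m(1,2)] by linarith
    then have "alpha n / 2 * SRstar nrm X n \<le> 0"
      using False by (simp add: mult_nonpos_nonneg)
    then show ?thesis using SR gap_pos[OF m(1,2)] by linarith
  qed
qed

lemma MR_pts_le:
  assumes "2 \<le> n" "n < card XN" "0 < alpha n"
  shows "MR nrm X (pts n) \<le> 2 / alpha n"
proof -
  have C: "0 < CR nrm X (pts n)" using assms by (intro CR_pts_pos) auto
  have "1 \<le> n - 1" using assms(1) by simp
  then have "alpha n * CR nrm X (pts n) / 2 \<le> gap (n - 1) / 2"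
    using alpha_mult_CR_le_gap[of n] gap_antimono[of "n - 1" n] assms by simp
  also have "\<dots> \<le> SR nrm (pts n)" using assms by (intro SR_pts_ge) auto
  finally have SR: "alpha n * CR nrm X (pts n) / 2 \<le> SR nrm (pts n)" .
  have "0 < alpha n * CR nrm X (pts n) / 2" using assms(3) C by simp
  then have "CR nrm X (pts n) / SR nrm (pts n) \<le> CR nrm X (pts n) / (alpha n * CR nrm X (pts n) / 2)"
    using SR C by (intro divide_left_mono mult_pos_pos) auto
  then show ?thesis unfolding MR_def using C by simp
qed

end

theorem theorem6:
  fixes nrm :: "real ^ 'd \<Rightarrow> real"
    and X XN :: "(real ^ 'd) set"
    and x :: "nat \<Rightarrow> real ^ 'd"
    and n :: nat
  assumes norm: "is_norm nrm"
    and cpt: "compact X"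
    and XN_fin: "finite XN" and XN_sub: "XN \<subseteq> X"
    and x1: "x 1 \<in> XN"
    and greedy: "\<And>m. m \<ge> 1 \<Longrightarrow> x (m + 1) \<in> XN \<and>
        (\<forall>y\<in>XN. (MIN i\<in>{1..m}. nrm (y - x i)) \<le> (MIN i\<in>{1..m}. nrm (x (m + 1) - x i)))"
    and n1: "1 \<le> n" and nN: "n < card XN"
  shows "(let Xn = x ` {1..n};
              \<alpha> = 1 - CR nrm X XN / CR nrm X Xn
          in (\<alpha> > 0 \<longrightarrow> CR nrm X Xn \<le> (2 / \<alpha>) * CRstar nrm X n)
           \<and> (n \<ge> 2 \<longrightarrow> SR nrm Xn \<ge> (\<alpha> / 2) * SRstar nrm X n)
           \<and> (n \<ge> 2 \<and> \<alpha> > 0 \<longrightarrow> MR nrm X Xn \<le> 2 / \<alpha>))"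
proof -
  interpret greedy_packing nrm X XN x
    using norm compact_imp_bounded[OF cpt] XN_fin XN_sub x1 greedy by unfold_locales auto
  show ?thesis
    using CR_pts_le_CRstar[OF n1 nN] SR_pts_ge_SRstar[OF _ nN] MR_pts_le[OF _ nN]
    unfolding Let_def pts_def alpha_def by simp
qed

end
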